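(* Let $0\le\tau\le\varepsilon$, $\lambda:=\tau/\varepsilon$, $u_n\in\mathcal V_{[0,1]}$. If $u$ is a minimiser of \[ \lambda\langle u,\mathbf{1} -u \rangle_{\mathcal V} + \|u-e^{-\tau\Delta}u_n\|^2_{\mathcal V} \] over $\{u\in\mathcal V_{[0,1]}:\mathcal M(u)=\mathcal M(u_n)\}$, then there exists $\beta\in\mathcal B(u)$ such that \[ u -e^{-\tau\Delta}u_n-\lambda u+\lambda\bar u\mathbf{1} =\lambda\beta -\lambda\bar\beta\mathbf{1}. \]
   Context: $G=(V,E)$ is a finite, simple, connected, undirected graph with weights $\omega_{ij}=\omega_{ji}>0$ for $ij\in E$, $\omega_{ij}=0$ otherwise; $d_i=\sum_j\omega_{ij}$, $r\in[0,1]$ fixed. $\mathcal V$ = functions $V\to\mathbb R$ with $\langle u,v\rangle_{\mathcal V}=\sum_i u_iv_id_i^r$ and norm $\|\cdot\|_{\mathcal V}$; $\mathcal V_{[0,1]}$ = functions $V\to[0,1]$. $(\Delta u)_i=d_i^{-r}\sum_j\omega_{ij}(u_i-u_j)$, $e^{-\tau\Delta}$ its matrix exponential. $\mathbf 1$ all-ones; $\mathcal M(u)=\langle u,\mathbf 1\rangle_{\mathcal V}$; $\bar v=\mathcal M(v)/\mathcal M(\mathbf 1)$. $\varepsilon>0$. For $u\in\mathcal V_{[0,1]}$, $\mathcal B(u)$ = set of $\beta\in\mathcal V$ with $\beta_i\ge0$ if $u_i=0$, $\beta_i=0$ if $0<u_i<1$, $\beta_i\le0$ if $u_i=1$. *)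

theory Defs
  imports "HOL-Analysis.Analysis"
begin

definition weighted_graph :: "('a::finite \<Rightarrow> 'a \<Rightarrow> real) \<Rightarrow> bool" where
  "weighted_graph w \<longleftrightarrow>
     (\<forall>i j. w i j = w j i) \<and> (\<forall>i j. 0 \<le> w i j) \<and> (\<forall>i. w i i = 0) \<and>
     (\<forall>i j. (i, j) \<in> {(x, y). 0 < w x y}\<^sup>*)"

definition deg :: "('a::finite \<Rightarrow> 'a \<Rightarrow> real) \<Rightarrow> 'a \<Rightarrow> real" where
  "deg w i = (\<Sum>j\<in>UNIV. w i j)"

text \<open>d_i^r, with the usual real-power convention 0^0 = 1.\<close>
definition degpow :: "('a::finite \<Rightarrow> 'a \<Rightarrow> real) \<Rightarrow> real \<Rightarrow> 'a \<Rightarrow> real" where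
  "degpow w r i = (if r = 0 then 1 else deg w i powr r)"

definition ipV :: "('a::finite \<Rightarrow> 'a \<Rightarrow> real) \<Rightarrow> real \<Rightarrow> ('a \<Rightarrow> real) \<Rightarrow> ('a \<Rightarrow> real) \<Rightarrow> real" where
  "ipV w r u v = (\<Sum>i\<in>UNIV. u i * v i * degpow w r i)"

definition normV :: "('a::finite \<Rightarrow> 'a \<Rightarrow> real) \<Rightarrow> real \<Rightarrow> ('a \<Rightarrow> real) \<Rightarrow> real" where
  "normV w r u = sqrt (ipV w r u u)"

definition V01 :: "('a::finite \<Rightarrow> real) set" where
  "V01 = {u. \<forall>i. 0 \<le> u i \<and> u i \<le> 1}"

definition graph_laplacian :: "('a::finite \<Rightarrow> 'a \<Rightarrow> real) \<Rightarrow> real \<Rightarrow> ('a \<Rightarrow> real) \<Rightarrow> ('a \<Rightarrow> real)" where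
  "graph_laplacian w r u = (\<lambda>i. inverse (degpow w r i) * (\<Sum>j\<in>UNIV. w i j * (u i - u j)))"

text \<open>Matrix exponential e^{-tau Delta} applied to u, via its defining power series
  sum_k (-tau)^k / k! Delta^k u (componentwise).\<close>
definition heat_op :: "('a::finite \<Rightarrow> 'a \<Rightarrow> real) \<Rightarrow> real \<Rightarrow> real \<Rightarrow> ('a \<Rightarrow> real) \<Rightarrow> ('a \<Rightarrow> real)" where
  "heat_op w r \<tau> u = (\<lambda>i. \<Sum>k. ((- \<tau>) ^ k / fact k) * (((graph_laplacian w r) ^^ k) u) i)"

definition massV :: "('a::finite \<Rightarrow> 'a \<Rightarrow> real) \<Rightarrow> real \<Rightarrow> ('a \<Rightarrow> real) \<Rightarrow> real" where
  "massV w r u = ipV w r u (\<lambda>_. 1)"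

definition meanV :: "('a::finite \<Rightarrow> 'a \<Rightarrow> real) \<Rightarrow> real \<Rightarrow> ('a \<Rightarrow> real) \<Rightarrow> real" where
  "meanV w r v = massV w r v / massV w r (\<lambda>_. 1)"

definition Bset :: "('a::finite \<Rightarrow> real) \<Rightarrow> ('a \<Rightarrow> real) set" where
  "Bset u = {\<beta>. \<forall>i. (u i = 0 \<longrightarrow> 0 \<le> \<beta> i) \<and> (0 < u i \<and> u i < 1 \<longrightarrow> \<beta> i = 0)
                      \<and> (u i = 1 \<longrightarrow> \<beta> i \<le> 0)}"

end

(* Write g = lam (1 - 2u) + 2(u - h) for the gradient at u of the MBO step energy
   lam <v, 1 - v> + |v - h|^2, where h = e^{-tau Delta} u_n.  Moving mass t > 0 from
   a vertex j with u_j > 0 to a vertex i with u_i < 1 is an admissible perturbation and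
   changes the energy by t (g_i - g_j) + O(t^2), so at a minimiser g_j <= g_i.  Hence a
   level mu separates g on {u > 0} from g on {u < 1}, and beta = (g - mu) / (2 lam) lies
   in B(u).  Since the heat operator conserves mass (the Laplacian is self-adjoint and
   kills constants), h and u have the same mean, and averaging lam beta gives the identity.
   For lam = 0 we have tau = 0, so h = u_n is admissible and is the minimiser. *)

theory Submission
  imports Defs
begin

section \<open>The heat operator conserves mass\<close>

definition l1norm :: "('a::finite \<Rightarrow> real) \<Rightarrow> real" where
  "l1norm v = (\<Sum>i\<in>UNIV. \<bar>v i\<bar>)"

lemma abs_le_l1norm: "\<bar>v i\<bar> \<le> l1norm v"
  unfolding l1norm_def by (rule member_le_sum) auto

lemma l1norm_funpow_le:
  fixes L :: "('a::finite \<Rightarrow> real) \<Rightarrow> ('a \<Rightarrow> real)"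
  assumes bound: "\<And>v. l1norm (L v) \<le> C * l1norm v" and C: "0 \<le> C"
  shows "l1norm ((L ^^ k) v) \<le> C ^ k * l1norm v"
proof (induction k)
  case 0
  then show ?case by simp
next
  case (Suc k)
  have "l1norm ((L ^^ Suc k) v) \<le> C * l1norm ((L ^^ k) v)"
    using bound by simp
  also have "\<dots> \<le> C * (C ^ k * l1norm v)"
    using Suc.IH C by (rule mult_left_mono)
  finally show ?case by (simp add: mult.assoc)
qed

lemma summable_exp_series_funpow:
  fixes L :: "('a::finite \<Rightarrow> real) \<Rightarrow> ('a \<Rightarrow> real)"
  assumes bound: "\<And>v. l1norm (L v) \<le> C * l1norm v" and C: "0 \<le> C"
  shows "summable (\<lambda>k. x ^ k / fact k * (L ^^ k) v i)"
proof (rule summable_comparison_test'[OF summable_mult2[OF summable_exp]])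
  fix k
  have "\<bar>(L ^^ k) v i\<bar> \<le> C ^ k * l1norm v"
    using abs_le_l1norm order_trans l1norm_funpow_le[OF bound C] by blast
  then have "\<bar>x\<bar> ^ k / fact k * \<bar>(L ^^ k) v i\<bar> \<le> \<bar>x\<bar> ^ k / fact k * (C ^ k * l1norm v)"
    by (intro mult_left_mono) auto
  then show "norm (x ^ k / fact k * (L ^^ k) v i) \<le> inverse (fact k) * (\<bar>x\<bar> * C) ^ k * l1norm v"
    by (simp add: abs_mult power_abs power_mult_distrib field_simps)
qed

lemma graph_laplacian_l1_bound:
  assumes nn: "\<forall>i j. 0 \<le> w i j" and pos: "\<forall>i. 0 < degpow w r i"
  shows "l1norm (graph_laplacian w r v) \<le> (\<Sum>i\<in>UNIV. 2 * deg w i / degpow w r i) * l1norm v"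
proof -
  have "\<bar>graph_laplacian w r v i\<bar> \<le> 2 * deg w i / degpow w r i * l1norm v" for i
  proof -
    have "\<bar>\<Sum>j\<in>UNIV. w i j * (v i - v j)\<bar> \<le> (\<Sum>j\<in>UNIV. w i j * (2 * l1norm v))"
    proof (rule order_trans[OF sum_abs sum_mono])
      fix j
      have "\<bar>v i - v j\<bar> \<le> 2 * l1norm v"
        using abs_le_l1norm[of v i] abs_le_l1norm[of v j] by linarith
      then show "\<bar>w i j * (v i - v j)\<bar> \<le> w i j * (2 * l1norm v)"
        using nn by (simp add: abs_mult mult_left_mono)
    qed
    also have "\<dots> = 2 * deg w i * l1norm v"
      by (simp add: deg_def sum_distrib_left mult_ac)
    finally show ?thesis
      using pos[rule_format, of i] by (simp add: graph_laplacian_def abs_mult field_simps)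
  qed
  then show ?thesis
    unfolding l1norm_def[of "graph_laplacian w r v"] sum_distrib_right by (rule sum_mono)
qed

lemma massV_graph_laplacian:
  assumes sym: "\<forall>i j. w i j = w j i" and pos: "\<forall>i. degpow w r i \<noteq> 0"
  shows "massV w r (graph_laplacian w r v) = 0"
proof -
  have "graph_laplacian w r v i * degpow w r i = (\<Sum>j\<in>UNIV. w i j * v i) - (\<Sum>j\<in>UNIV. w i j * v j)" for i
    using pos[rule_format, of i]
    by (simp add: graph_laplacian_def sum_subtractf[symmetric] right_diff_distrib)
  then have "massV w r (graph_laplacian w r v)
      = (\<Sum>i\<in>UNIV. \<Sum>j\<in>UNIV. w i j * v i) - (\<Sum>i\<in>UNIV. \<Sum>j\<in>UNIV. w i j * v j)"
    by (simp add: massV_def ipV_def sum_subtractf)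
  also have "(\<Sum>i\<in>UNIV. \<Sum>j\<in>UNIV. w i j * v j) = (\<Sum>i\<in>UNIV. \<Sum>j\<in>UNIV. w i j * v i)"
    using sym by (subst sum.swap) simp
  finally show ?thesis by simp
qed

lemma massV_heat_op:
  assumes sym: "\<forall>i j. w i j = w j i" and nn: "\<forall>i j. 0 \<le> w i j" and pos: "\<forall>i. 0 < degpow w r i"
  shows "massV w r (heat_op w r \<tau> v) = massV w r v"
proof -
  let ?L = "graph_laplacian w r"
  have summable: "summable (\<lambda>k. (- \<tau>) ^ k / fact k * (?L ^^ k) v i)" for i
    using graph_laplacian_l1_bound[OF nn pos]
    by (rule summable_exp_series_funpow)
      (use nn pos in \<open>auto intro!: sum_nonneg divide_nonneg_pos simp: deg_def\<close>)
  have "massV w r (heat_op w r \<tau> v) = (\<Sum>i\<in>UNIV. \<Sum>k. (- \<tau>) ^ k / fact k * (?L ^^ k) v i * degpow w r i)"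
    unfolding massV_def ipV_def heat_op_def using summable by (simp add: suminf_mult2)
  also have "\<dots> = (\<Sum>k. \<Sum>i\<in>UNIV. (- \<tau>) ^ k / fact k * (?L ^^ k) v i * degpow w r i)"
    using summable_mult2[OF summable] by (rule suminf_sum[symmetric])
  also have "\<dots> = (\<Sum>k. (- \<tau>) ^ k / fact k * massV w r ((?L ^^ k) v))"
    by (simp add: massV_def ipV_def sum_distrib_left mult.assoc)
  also have "\<dots> = massV w r v"
  proof (subst suminf_finite[of "{0}"])
    show "(- \<tau>) ^ k / fact k * massV w r ((?L ^^ k) v) = 0" if "k \<notin> {0}" for k
      using that massV_graph_laplacian[OF sym] pos by (cases k) (auto simp: less_imp_neq[symmetric])
  qed simp_all
  finally show ?thesis .
qed

lemma heat_op_0: "heat_op w r 0 v = v"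
  unfolding heat_op_def by (rule ext, subst suminf_finite[of "{0}"]) (auto simp: power_0_left)

section \<open>Minimisers of the mass-constrained energy\<close>

definition mbo_energy :: "('a::finite \<Rightarrow> real) \<Rightarrow> real \<Rightarrow> ('a \<Rightarrow> real) \<Rightarrow> ('a \<Rightarrow> real) \<Rightarrow> real" where
  "mbo_energy m lam h v = (\<Sum>k\<in>UNIV. m k * (lam * v k * (1 - v k) + (v k - h k)\<^sup>2))"

definition energy_gradient :: "real \<Rightarrow> ('a \<Rightarrow> real) \<Rightarrow> ('a \<Rightarrow> real) \<Rightarrow> 'a \<Rightarrow> real" where
  "energy_gradient lam h u k = lam * (1 - 2 * u k) + 2 * (u k - h k)"

definition constrained_minimiser ::
    "('a::finite \<Rightarrow> real) \<Rightarrow> real \<Rightarrow> ('a \<Rightarrow> real) \<Rightarrow> ('a \<Rightarrow> real) \<Rightarrow> bool" where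
  "constrained_minimiser m lam h u \<longleftrightarrow> u \<in> V01 \<and>
     (\<forall>v\<in>V01. (\<Sum>k\<in>UNIV. v k * m k) = (\<Sum>k\<in>UNIV. u k * m k) \<longrightarrow>
        mbo_energy m lam h u \<le> mbo_energy m lam h v)"

lemma ipV_normV_eq_mbo_energy:
  assumes "\<forall>i. 0 \<le> degpow w r i"
  shows "lam * ipV w r v (\<lambda>i. 1 - v i) + (normV w r (\<lambda>i. v i - h i))\<^sup>2
     = mbo_energy (degpow w r) lam h v"
proof -
  have "0 \<le> ipV w r (\<lambda>i. v i - h i) (\<lambda>i. v i - h i)"
    unfolding ipV_def using assms by (auto intro!: sum_nonneg)
  then show ?thesis
    by (simp add: normV_def ipV_def mbo_energy_def sum_distrib_left sum.distrib[symmetric]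
        algebra_simps power2_eq_square)
qed

lemma mbo_energy_diff:
  "mbo_energy m lam h v - mbo_energy m lam h u
     = (\<Sum>k\<in>UNIV. m k * (v k - u k) * energy_gradient lam h u k)
       + (1 - lam) * (\<Sum>k\<in>UNIV. m k * (v k - u k)\<^sup>2)"
  unfolding mbo_energy_def energy_gradient_def
  by (simp add: sum_subtractf[symmetric] sum_distrib_left sum.distrib[symmetric])
     (intro sum.cong refl; simp add: algebra_simps power2_eq_square)

lemma sum_UNIV_two_support:
  fixes f :: "'a::finite \<Rightarrow> 'b::comm_monoid_add"
  assumes "i \<noteq> j" and "\<And>k. k \<noteq> i \<Longrightarrow> k \<noteq> j \<Longrightarrow> f k = 0"
  shows "(\<Sum>k\<in>UNIV. f k) = f i + f j"
proof -
  have "(\<Sum>k\<in>UNIV. f k) = (\<Sum>k\<in>{i, j}. f k)"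
    by (rule sum.mono_neutral_right) (use assms in auto)
  then show ?thesis using assms(1) by simp
qed

lemma transfer_diff:
  fixes u :: "'a \<Rightarrow> real"
  assumes "i \<noteq> j"
  shows "(u(i := u i + a, j := u j - b)) k - u k = (if k = i then a else 0) - (if k = j then b else 0)"
  using assms by auto

lemma mass_transfer:
  fixes u m :: "'a::finite \<Rightarrow> real"
  assumes "i \<noteq> j" "m i \<noteq> 0" "m j \<noteq> 0"
  shows "(\<Sum>k\<in>UNIV. (u(i := u i + t / m i, j := u j - t / m j)) k * m k) = (\<Sum>k\<in>UNIV. u k * m k)"
proof -
  let ?v = "u(i := u i + t / m i, j := u j - t / m j)"
  have "(\<Sum>k\<in>UNIV. ?v k * m k) - (\<Sum>k\<in>UNIV. u k * m k) = (\<Sum>k\<in>UNIV. (?v k - u k) * m k)"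
    by (simp only: left_diff_distrib sum_subtractf)
  also have "\<dots> = 0"
    using assms by (subst sum_UNIV_two_support[of i j]) (auto simp: transfer_diff)
  finally show ?thesis by simp
qed

lemma mbo_energy_transfer:
  fixes u m :: "'a::finite \<Rightarrow> real"
  assumes ij: "i \<noteq> j" and m: "m i \<noteq> 0" "m j \<noteq> 0"
  shows "mbo_energy m lam h (u(i := u i + t / m i, j := u j - t / m j)) - mbo_energy m lam h u
     = t * (energy_gradient lam h u i - energy_gradient lam h u j)
       + (1 - lam) * t\<^sup>2 * (1 / m i + 1 / m j)"
proof -
  let ?v = "u(i := u i + t / m i, j := u j - t / m j)"
  let ?g = "energy_gradient lam h u"
  have "(\<Sum>k\<in>UNIV. m k * (?v k - u k) * ?g k) = t * (?g i - ?g j)"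
    using ij m by (subst sum_UNIV_two_support[of i j]) (auto simp: transfer_diff algebra_simps)
  moreover have "(\<Sum>k\<in>UNIV. m k * (?v k - u k)\<^sup>2) = t\<^sup>2 * (1 / m i + 1 / m j)"
    using ij m by (subst sum_UNIV_two_support[of i j]) (auto simp: transfer_diff power2_eq_square field_simps)
  ultimately show ?thesis
    unfolding mbo_energy_diff by simp
qed

lemma nonneg_if_affine_nonneg_near_0:
  fixes a K T :: real
  assumes "0 < T" and "\<And>t. 0 < t \<Longrightarrow> t < T \<Longrightarrow> 0 \<le> a + t * K"
  shows "0 \<le> a"
proof (rule tendsto_lowerbound)
  show "((\<lambda>t. a + t * K) \<longlongrightarrow> a) (at_right 0)"
    by (auto intro!: tendsto_eq_intros)
  show "\<forall>\<^sub>F t in at_right 0. 0 \<le> a + t * K"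
    using eventually_at_right_real[OF \<open>0 < T\<close>] by eventually_elim (use assms in auto)
qed simp

lemma transfer_in_V01:
  assumes "u \<in> V01" "0 \<le> a" "a \<le> 1 - u i" "0 \<le> b" "b \<le> u j"
  shows "u(i := u i + a, j := u j - b) \<in> V01"
proof -
  have u01: "0 \<le> u k \<and> u k \<le> 1" for k
    using assms(1) by (simp add: V01_def)
  have "0 \<le> (u(i := u i + a, j := u j - b)) k \<and> (u(i := u i + a, j := u j - b)) k \<le> 1" for k
    using assms(2-5) u01[of i] u01[of j] u01[of k] by auto
  then show ?thesis by (simp add: V01_def)
qed

lemma energy_gradient_exchange:
  assumes min: "constrained_minimiser m lam h u" and pos: "\<forall>k. 0 < m k"
    and ui: "u i < 1" and uj: "0 < u j"
  shows "energy_gradient lam h u j \<le> energy_gradient lam h u i"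
proof (cases "i = j")
  case False
  let ?g = "energy_gradient lam h u"
  have m_pos: "0 < m i" "0 < m j"
    using pos by simp_all
  then have m_ne: "m i \<noteq> 0" "m j \<noteq> 0"
    by simp_all
  define T where "T = min ((1 - u i) * m i) (u j * m j)"
  define K where "K = (1 - lam) * (1 / m i + 1 / m j)"
  have "0 \<le> (?g i - ?g j) + t * K" if t: "0 < t" "t < T" for t
  proof -
    let ?v = "u(i := u i + t / m i, j := u j - t / m j)"
    have "?v \<in> V01"
      using min t m_pos unfolding constrained_minimiser_def T_def
      by (intro transfer_in_V01) (auto simp: field_simps)
    moreover have "(\<Sum>k\<in>UNIV. ?v k * m k) = (\<Sum>k\<in>UNIV. u k * m k)"
      by (rule mass_transfer[OF False m_ne])
    ultimately have "0 \<le> mbo_energy m lam h ?v - mbo_energy m lam h u"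
      using min unfolding constrained_minimiser_def by simp
    also have "\<dots> = t * (?g i - ?g j) + (1 - lam) * t\<^sup>2 * (1 / m i + 1 / m j)"
      by (rule mbo_energy_transfer[OF False m_ne])
    also have "\<dots> = t * ((?g i - ?g j) + t * K)"
      unfolding K_def using m_ne by (simp add: power2_eq_square field_simps)
    finally show ?thesis
      using t by (simp add: zero_le_mult_iff)
  qed
  moreover have "0 < T"
    using ui uj m_pos unfolding T_def by simp
  ultimately have "0 \<le> ?g i - ?g j"
    by (rule nonneg_if_affine_nonneg_near_0[rotated])
  then show ?thesis by simp
qed simp

lemma exists_separating_level:
  fixes p :: "'a::finite \<Rightarrow> real"
  assumes "\<And>i j. i \<in> Q \<Longrightarrow> j \<in> P \<Longrightarrow> p j \<le> p i"
  shows "\<exists>\<mu>. (\<forall>j\<in>P. p j \<le> \<mu>) \<and> (\<forall>i\<in>Q. \<mu> \<le> p i)"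
proof (cases "P = {}")
  case True
  then show ?thesis by (intro exI[of _ "Min (range p)"]) simp
next
  case False
  then show ?thesis using assms by (intro exI[of _ "Max (p ` P)"]) (simp add: Max_le_iff)
qed

lemma shifted_gradient_in_Bset:
  assumes "0 < c" and "\<forall>i. u i < 1 \<longrightarrow> \<mu> \<le> p i" and "\<forall>i. 0 < u i \<longrightarrow> p i \<le> \<mu>"
  shows "(\<lambda>i. (p i - \<mu>) / c) \<in> Bset u"
proof -
  have "(u i = 0 \<longrightarrow> 0 \<le> (p i - \<mu>) / c) \<and> (0 < u i \<and> u i < 1 \<longrightarrow> (p i - \<mu>) / c = 0)
      \<and> (u i = 1 \<longrightarrow> (p i - \<mu>) / c \<le> 0)" for i
    using assms(1) assms(2,3)[rule_format, of i] by (auto simp: divide_nonpos_pos)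
  then show ?thesis unfolding Bset_def by blast
qed

lemma constrained_minimiser_kkt:
  assumes min: "constrained_minimiser m lam h u" and pos: "\<forall>k. 0 < m k"
    and lam: "0 < lam"
  shows "\<exists>\<beta>\<in>Bset u. \<exists>c. \<forall>i. lam * \<beta> i = u i - h i - lam * u i + c"
proof -
  let ?g = "energy_gradient lam h u"
  have "?g j \<le> ?g i" if "i \<in> {i. u i < 1}" "j \<in> {j. 0 < u j}" for i j
    using energy_gradient_exchange[OF min pos] that by simp
  then obtain \<mu> where "\<forall>j\<in>{j. 0 < u j}. ?g j \<le> \<mu>" "\<forall>i\<in>{i. u i < 1}. \<mu> \<le> ?g i"
    using exists_separating_level by blast
  then have "(\<lambda>i. (?g i - \<mu>) / (2 * lam)) \<in> Bset u"
    using lam by (intro shifted_gradient_in_Bset) auto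
  moreover have "lam * ((?g i - \<mu>) / (2 * lam)) = u i - h i - lam * u i + (lam - \<mu>) / 2" for i
    using lam by (simp add: energy_gradient_def field_simps)
  ultimately show ?thesis
    by (intro bexI[where x = "\<lambda>i. (?g i - \<mu>) / (2 * lam)"] exI[where x = "(lam - \<mu>) / 2"]) auto
qed

lemma constrained_minimiser_0:
  assumes min: "constrained_minimiser m 0 h u" and pos: "\<forall>k. 0 < m k"
    and h: "h \<in> V01" "(\<Sum>k\<in>UNIV. h k * m k) = (\<Sum>k\<in>UNIV. u k * m k)"
  shows "u = h"
proof
  fix i
  have nonneg: "0 \<le> m k * (u k - h k)\<^sup>2" for k
    using pos by (simp add: less_imp_le)
  have "mbo_energy m 0 h u \<le> mbo_energy m 0 h h"
    using min h unfolding constrained_minimiser_def by blast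
  then have "(\<Sum>k\<in>UNIV. m k * (u k - h k)\<^sup>2) \<le> 0"
    by (simp add: mbo_energy_def)
  moreover have "0 \<le> (\<Sum>k\<in>UNIV. m k * (u k - h k)\<^sup>2)"
    using nonneg by (simp add: sum_nonneg)
  ultimately have "(\<Sum>k\<in>UNIV. m k * (u k - h k)\<^sup>2) = 0"
    by linarith
  then have "m i * (u i - h i)\<^sup>2 = 0"
    using sum_nonneg_0[of UNIV "\<lambda>k. m k * (u k - h k)\<^sup>2" i] nonneg by simp
  then show "u i = h i" using pos[rule_format, of i] by simp
qed

lemma meanV_centering:
  assumes mass1: "massV w r (\<lambda>_. 1) \<noteq> 0" and mass: "massV w r h = massV w r u"
    and \<beta>: "\<forall>i. lam * \<beta> i = u i - h i - lam * u i + c"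
  shows "u i - h i - lam * u i + lam * meanV w r u = lam * \<beta> i - lam * meanV w r \<beta>"
proof -
  have "lam * massV w r \<beta> = (\<Sum>i\<in>UNIV. (lam * \<beta> i) * degpow w r i)"
    by (simp add: massV_def ipV_def sum_distrib_left mult.assoc)
  also have "\<dots> = (\<Sum>i\<in>UNIV. (u i - h i - lam * u i + c) * degpow w r i)"
    using \<beta> by simp
  also have "\<dots> = massV w r u - massV w r h - lam * massV w r u + c * massV w r (\<lambda>_. 1)"
    by (simp add: massV_def ipV_def algebra_simps sum.distrib sum_subtractf sum_distrib_left)
  finally have "lam * massV w r \<beta> = massV w r u - massV w r h - lam * massV w r u + c * massV w r (\<lambda>_. 1)" .
  then have "lam * meanV w r \<beta> = c - lam * meanV w r u"
    using mass mass1 by (simp add: meanV_def field_simps)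
  then show ?thesis using \<beta> by simp
qed

theorem theorem32:
  fixes w :: "'a::finite \<Rightarrow> 'a \<Rightarrow> real"
    and r \<epsilon> \<tau> lam :: real
    and un u :: "'a \<Rightarrow> real"
  assumes graph: "weighted_graph w"
    and r: "0 \<le> r" "r \<le> 1"
    and ip_pos: "\<forall>i. 0 < degpow w r i"
    and eps: "0 < \<epsilon>"
    and tau: "0 \<le> \<tau>" "\<tau> \<le> \<epsilon>"
    and lam_def: "lam = \<tau> / \<epsilon>"
    and un: "un \<in> V01"
    and u_adm: "u \<in> V01" "massV w r u = massV w r un"
    and u_min: "\<forall>v\<in>V01. massV w r v = massV w r un \<longrightarrow>
        lam * ipV w r u (\<lambda>i. 1 - u i) + (normV w r (\<lambda>i. u i - heat_op w r \<tau> un i))\<^sup>2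
          \<le> lam * ipV w r v (\<lambda>i. 1 - v i) + (normV w r (\<lambda>i. v i - heat_op w r \<tau> un i))\<^sup>2"
  shows "\<exists>\<beta>\<in>Bset u. \<forall>i.
           u i - heat_op w r \<tau> un i - lam * u i + lam * meanV w r u
             = lam * \<beta> i - lam * meanV w r \<beta>"
proof -
  let ?m = "degpow w r" and ?h = "heat_op w r \<tau> un"
  have sym: "\<forall>i j. w i j = w j i" and nn: "\<forall>i j. 0 \<le> w i j"
    using graph unfolding weighted_graph_def by auto
  have mass_eq: "massV w r v = (\<Sum>k\<in>UNIV. v k * ?m k)" for v
    by (simp add: massV_def ipV_def)
  have min: "constrained_minimiser ?m lam ?h u"
    using u_adm u_min ip_pos
    by (simp add: constrained_minimiser_def mass_eq ipV_normV_eq_mbo_energy less_imp_le)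
  have h_mass: "massV w r ?h = massV w r u"
    using massV_heat_op[OF sym nn ip_pos] u_adm(2) by simp
  show ?thesis
  proof (cases "lam = 0")
    case True
    then have "?h = un"
      using eps heat_op_0 unfolding lam_def by simp
    then have "u = ?h"
      using constrained_minimiser_0[of ?m ?h u] min True un u_adm(2) ip_pos by (simp add: mass_eq)
    then show ?thesis
      using True by (intro bexI[where x = "\<lambda>_. 0"]) (auto simp: Bset_def)
  next
    case False
    then have "0 < lam"
      using tau eps unfolding lam_def by auto
    then obtain \<beta> c where "\<beta> \<in> Bset u" "\<forall>i. lam * \<beta> i = u i - ?h i - lam * u i + c"
      using constrained_minimiser_kkt[OF min] ip_pos by blast
    moreover have "massV w r (\<lambda>_. 1) \<noteq> 0"
      using ip_pos by (simp add: mass_eq sum_pos less_imp_neq[symmetric])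
    ultimately show ?thesis
      using meanV_centering h_mass by blast
  qed
qed

end
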